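(* Let $q(x)\in\mathbb{Z}[x]$ be a monic polynomial of degree $g$ whose coefficient of $x^{g-1}$ is nonzero, and let $\mathrm{sym}(q)(x)=x^{g}\,q\!\left(x+\frac1x\right)$. Then $\mathrm{sym}(q)(x)$ is not a polynomial in $x^k$ for any integer $k>1$. *)

theory Defs
  imports "HOL-Computational_Algebra.Polynomial"
begin

text \<open>sym(q)(x) = x^g q(x + 1/x), with g = deg q, written as the integer polynomial
  sum_{i<=g} q_i (x^2+1)^i x^(g-i).\<close>
definition sym_poly :: "int poly \<Rightarrow> int poly" where
  "sym_poly q = (\<Sum>i\<le>degree q. smult (coeff q i) ([:1, 0, 1:] ^ i * monom 1 (degree q - i)))"

definition poly_in_power :: "int poly \<Rightarrow> nat \<Rightarrow> bool" where
  "poly_in_power p k \<longleftrightarrow> (\<exists>r. p = pcompose r (monom 1 k))"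

end

theory Submission
  imports Defs
begin

text \<open>The top two coefficients of sym(q) sit at the consecutive exponents 2g and 2g - 1:
  only the summand (x^2+1)^g reaches degree 2g, and it is even, so the coefficient of x^(2g-1)
  comes from x (x^2+1)^(g-1) alone and equals q_(g-1). A polynomial in x^k has nonzero
  coefficients only at multiples of k, so k divides both 2g and 2g - 1, i.e. k = 1.\<close>

lemma coeff_pcompose_monom_not_dvd:
  fixes r :: "'a::comm_semiring_1 poly"
  assumes "\<not> k dvd n"
  shows "coeff (pcompose r (monom 1 k)) n = 0"
  using assms
proof (induction r arbitrary: n rule: pCons_induct)
  case 0
  then show ?case by (cases n) auto
next
  case (pCons a p)
  have "n \<noteq> 0" using pCons.prems by (metis dvd_0_right)
  then have "coeff (pcompose (pCons a p) (monom 1 k)) n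
        = (if n < k then 0 else coeff (pcompose p (monom 1 k)) (n - k))"
    by (simp add: pcompose_pCons coeff_monom_mult coeff_pCons split: nat.splits)
  also have "\<dots> = 0"
  proof (cases "n < k")
    case False
    then have "\<not> k dvd (n - k)" using pCons.prems by (simp add: dvd_minus_self)
    then show ?thesis using pCons.IH by simp
  qed simp
  finally show ?case .
qed

lemma poly_in_power_coeff_dvd:
  assumes "poly_in_power p k" and "coeff p n \<noteq> 0"
  shows "k dvd n"
  using assms coeff_pcompose_monom_not_dvd unfolding poly_in_power_def by blast

lemma coeff_one_plus_square_power_odd:
  assumes "odd n"
  shows "coeff ([:1, 0, 1:] ^ i :: 'a::comm_semiring_1 poly) n = 0"
proof -
  have "[:1, 0, 1:] = pcompose [:1, 1:] (monom (1 :: 'a) 2)"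
    by (simp add: pcompose_pCons monom_altdef numeral_2_eq_2 one_pCons)
  then have "[:1, 0, 1:] ^ i = pcompose ([:1, 1:] ^ i) (monom (1 :: 'a) 2)"
    by (induction i) (simp_all only: power_0 power_Suc pcompose_1 pcompose_mult)
  then show ?thesis using assms by (simp add: coeff_pcompose_monom_not_dvd)
qed

definition sym_summand :: "nat \<Rightarrow> nat \<Rightarrow> 'a::comm_semiring_1 poly" where
  "sym_summand g i = [:1, 0, 1:] ^ i * monom 1 (g - i)"

lemma coeff_sym_summand:
  "coeff (sym_summand g i) n = (if n < g - i then 0 else coeff ([:1, 0, 1:] ^ i) (n - (g - i)))"
  by (simp add: sym_summand_def mult.commute[of _ "monom 1 _"] coeff_monom_mult)

lemma degree_sym_summand:
  assumes "i \<le> g"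
  shows "degree (sym_summand g i :: 'a::idom poly) = g + i"
  using assms by (simp add: sym_summand_def degree_mult_eq degree_power_eq degree_monom_eq)

lemma coeff_sym_summand_degree:
  assumes "i \<le> g"
  shows "coeff (sym_summand g i :: 'a::idom poly) (g + i) = 1"
proof -
  have "lead_coeff ([:1, 0, 1:] ^ i :: 'a poly) = 1"
    by (simp add: lead_coeff_power)
  then show ?thesis
    using assms by (simp add: coeff_sym_summand degree_power_eq)
qed

lemma coeff_sym_poly_single:
  assumes "j \<le> degree q"
    and "\<And>i. i \<le> degree q \<Longrightarrow> i \<noteq> j \<Longrightarrow> coeff (sym_summand (degree q) i :: int poly) n = 0"
  shows "coeff (sym_poly q) n = coeff q j * coeff (sym_summand (degree q) j) n"
proof -
  have "coeff (sym_poly q) n = (\<Sum>i\<le>degree q. coeff q i * coeff (sym_summand (degree q) i) n)"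
    by (simp add: sym_poly_def sym_summand_def coeff_sum)
  also have "\<dots> = (\<Sum>i\<in>{j}. coeff q i * coeff (sym_summand (degree q) i) n)"
    using assms by (intro sum.mono_neutral_right) auto
  finally show ?thesis by simp
qed

lemma coeff_sym_poly_top: "coeff (sym_poly q) (2 * degree q) = lead_coeff q"
proof -
  have vanish: "coeff (sym_summand (degree q) i) (2 * degree q) = (0 :: int)"
    if "i \<le> degree q" and "i \<noteq> degree q" for i
    using that by (intro coeff_eq_0) (simp add: degree_sym_summand)
  have "coeff (sym_poly q) (2 * degree q)
      = lead_coeff q * coeff (sym_summand (degree q) (degree q)) (2 * degree q)"
    using coeff_sym_poly_single[OF _ vanish] by simp
  moreover have "coeff (sym_summand (degree q) (degree q)) (2 * degree q) = (1 :: int)"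
    using coeff_sym_summand_degree[of "degree q" "degree q"] by (simp add: mult_2)
  ultimately show ?thesis by simp
qed

lemma coeff_sym_poly_below_top:
  assumes "degree q \<ge> 1"
  shows "coeff (sym_poly q) (2 * degree q - 1) = coeff q (degree q - 1)"
proof -
  let ?g = "degree q"
  have vanish: "coeff (sym_summand ?g i) (2 * ?g - 1) = (0 :: int)"
    if "i \<le> ?g" and "i \<noteq> ?g - 1" for i
  proof (cases "i = ?g")
    case True
    then show ?thesis using assms by (simp add: coeff_sym_summand coeff_one_plus_square_power_odd)
  next
    case False
    then show ?thesis using that by (intro coeff_eq_0) (simp add: degree_sym_summand)
  qed
  have "coeff (sym_poly q) (2 * ?g - 1) = coeff q (?g - 1) * coeff (sym_summand ?g (?g - 1)) (2 * ?g - 1)"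
    using coeff_sym_poly_single[OF _ vanish] by simp
  moreover have "coeff (sym_summand ?g (?g - 1)) (2 * ?g - 1) = (1 :: int)"
    using coeff_sym_summand_degree[of "?g - 1" ?g] assms by (simp add: mult_2)
  ultimately show ?thesis by simp
qed

theorem lemma3p3:
  fixes q :: "int poly" and g :: nat
  assumes "degree q = g" and "g \<ge> 1" and "lead_coeff q = 1"
    and "coeff q (g - 1) \<noteq> 0"
  shows "\<forall>k::nat. k > 1 \<longrightarrow> \<not> poly_in_power (sym_poly q) k"
proof (intro allI impI notI)
  fix k :: nat
  assume "k > 1" and power: "poly_in_power (sym_poly q) k"
  have "coeff (sym_poly q) (2 * g) \<noteq> 0"
    using coeff_sym_poly_top[of q] assms(1,3) by simp
  then have top: "k dvd 2 * g"
    by (rule poly_in_power_coeff_dvd[OF power])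
  have "coeff (sym_poly q) (2 * g - 1) \<noteq> 0"
    using coeff_sym_poly_below_top[of q] assms(1,2,4) by simp
  then have below_top: "k dvd 2 * g - 1"
    by (rule poly_in_power_coeff_dvd[OF power])
  have "k dvd 1"
    using dvd_diff_nat[OF top below_top] assms(2) by simp
  with \<open>k > 1\<close> show False by simp
qed

end
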